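(* Let $y:\Lambda\to\mathbb R$ and $\alpha\in[Dy]$ be such that $\alpha_b\to0$ as $|b|\to\infty$. Then for any $\alpha'\in[Dy]$, the set $\mathcal C^\pm[\alpha']$ is finite and $$\sum_{C\in\mathcal C^\pm[\alpha']}\int_{\partial C}\alpha'=\sum_{C\in\mathcal C^\pm[\alpha]}\int_{\partial C}\alpha=\int_\Gamma\alpha,$$ where $\Gamma$ is any loop that encloses all cores of $\alpha$, i.e. $\Gamma=\partial A$ for a finite sum $A$ of positively oriented cells containing every element of $\mathcal C^\pm[\alpha]$.
   Context: $\mathsf R_6$ rotation by $\pi/3$, $a_1=(1,0)^T$, $a_i=\mathsf R_6^{i-1}a_1$, $\Lambda:=(\tfrac12,\tfrac{\sqrt3}{6})^T+\{ma_1+na_2:m,n\in\mathbb Z\}$. Bonds $\mathcal B=\{(\xi,\eta)\in\Lambda^2:|\xi-\eta|=1\}$ (ordered pairs), $-b=(\eta,\xi)$, $Dy_b=y(\eta)-y(\xi)$; $|b|$ is the distance from the origin to the closed segment $b$. A cell is a triple $C=(\xi,\zeta,\eta)$ of lattice points pairwise joined by bonds; positively oriented if counterclockwise; $\partial C=(\xi,\zeta)+(\zeta,\eta)+(\eta,\xi)$; for a finite sum $A$ of cells, $\partial A$ is the sum of their boundaries (as formal sums of bonds, where $b+(-b)=0$). For $\alpha:\mathcal B\to\mathbb R$ and a formal sum $\Gamma=\sum_k b_k$, $\int_\Gamma\alpha=\sum_k\alpha_{b_k}$. $[Dy]$ is the set of $\alpha:\mathcal B\to[-\tfrac12,\tfrac12]$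 with $\alpha_{-b}=-\alpha_b$ and $Dy_b-\alpha_b\in\mathbb Z$ for all $b$. A dislocation core of $\alpha$ is a positively oriented cell $C$ with $\int_{\partial C}\alpha\ne0$; $\mathcal C^\pm[\alpha]$ is the set of dislocation cores of $\alpha$. *)

theory Defs
  imports "HOL-Analysis.Analysis" "HOL-Library.Multiset"
begin

text \<open>The plane is identified with the complex numbers. a_1 = 1, a_2 = R_6 a_1 = cis(pi/3).\<close>

definition a1 :: complex where "a1 = 1"
definition a2 :: complex where "a2 = cis (pi / 3)"

definition lattice :: "complex set" where
  "lattice = {Complex (1/2) (sqrt 3 / 6) + of_int m * a1 + of_int n * a2 | m n :: int. True}"

type_synonym bond = "complex \<times> complex"

definition bonds :: "bond set" where
  "bonds = {(\<xi>, \<eta>). \<xi> \<in> lattice \<and> \<eta> \<in> lattice \<and> cmod (\<xi> - \<eta>) = 1}"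

definition neg_bond :: "bond \<Rightarrow> bond" where
  "neg_bond b = (snd b, fst b)"

definition bond_norm :: "bond \<Rightarrow> real" where
  "bond_norm b = infdist 0 (closed_segment (fst b) (snd b))"

definition Dy :: "(complex \<Rightarrow> real) \<Rightarrow> bond \<Rightarrow> real" where
  "Dy y b = y (snd b) - y (fst b)"

definition Dy_class :: "(complex \<Rightarrow> real) \<Rightarrow> (bond \<Rightarrow> real) set" where
  "Dy_class y = {\<alpha>. \<forall>b\<in>bonds. \<alpha> b \<in> {-1/2..1/2} \<and> \<alpha> (neg_bond b) = - \<alpha> b
                      \<and> Dy y b - \<alpha> b \<in> \<int>}"

text \<open>A cell is represented by its set of three vertices (pairwise joined by bonds);
  each such vertex set carries exactly one positive (counterclockwise) orientation,
  so positively oriented cells correspond to these vertex sets.\<close>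
definition pos_cells :: "complex set set" where
  "pos_cells = {T. T \<subseteq> lattice \<and> card T = 3 \<and>
                   (\<forall>p\<in>T. \<forall>q\<in>T. p \<noteq> q \<longrightarrow> (p, q) \<in> bonds)}"

text \<open>The bonds of the boundary of the positively oriented cell with vertex set T:
  (p,q) such that the remaining vertex lies strictly to the left of p -> q.\<close>
definition ccw_bonds :: "complex set \<Rightarrow> bond set" where
  "ccw_bonds T = {(p, q). p \<in> T \<and> q \<in> T \<and> p \<noteq> q \<and>
                     (\<forall>r \<in> T - {p, q}. Im (cnj (q - p) * (r - p)) > 0)}"

text \<open>Formal sums of bonds are multisets of bonds; integral of alpha over a formal sum.\<close>
definition chain_int :: "(bond \<Rightarrow> real) \<Rightarrow> bond multiset \<Rightarrow> real" where
  "chain_int \<alpha> \<Gamma> = sum_mset (image_mset \<alpha> \<Gamma>)"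

definition cell_boundary :: "complex set \<Rightarrow> bond multiset" where
  "cell_boundary T = mset_set (ccw_bonds T)"

text \<open>Boundary of a finite sum (here: finite set) of positively oriented cells.\<close>
definition boundary :: "complex set set \<Rightarrow> bond multiset" where
  "boundary A = (\<Sum>C\<in>A. cell_boundary C)"

definition cores :: "(bond \<Rightarrow> real) \<Rightarrow> complex set set" where
  "cores \<alpha> = {C \<in> pos_cells. chain_int \<alpha> (cell_boundary C) \<noteq> 0}"

end

theory Submission
  imports Defs
begin

text \<open>Since \<open>\<alpha>\<close> and \<open>\<alpha>'\<close> both reduce \<open>Dy\<close> modulo \<open>\<int>\<close>, the difference \<open>\<beta> = \<alpha>' - \<alpha>\<close> is integer
  valued; as \<open>\<alpha>\<close> is smaller than \<open>1/3\<close> far from the origin, both \<open>\<beta>\<close> and the (integer) cell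
  integrals of \<open>\<alpha>\<close> vanish there, so there are only finitely many cores. The change of the total
  core charge is the sum of the cell integrals of the finitely supported antisymmetric \<open>\<beta>\<close>;
  by the point reflection through the midpoint of a bond, each bond \<open>b\<close> lies on as many
  positively oriented cells as \<open>-b\<close>, so this sum cancels. The loop formula holds because
  the cells of \<open>A\<close> that are not cores contribute nothing.\<close>

subsection \<open>Lattice and bonds\<close>

lemma lattice_point_reflection:
  assumes "p \<in> lattice" "q \<in> lattice" "z \<in> lattice"
  shows "p + q - z \<in> lattice"
proof -
  obtain m1 n1 m2 n2 m3 n3 where
    "p = Complex (1/2) (sqrt 3 / 6) + of_int m1 * a1 + of_int n1 * a2"
    "q = Complex (1/2) (sqrt 3 / 6) + of_int m2 * a1 + of_int n2 * a2"
    "z = Complex (1/2) (sqrt 3 / 6) + of_int m3 * a1 + of_int n3 * a2"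
    using assms unfolding lattice_def by blast
  then have "p + q - z = Complex (1/2) (sqrt 3 / 6) + of_int (m1 + m2 - m3) * a1
                                                 + of_int (n1 + n2 - n3) * a2"
    by (simp add: algebra_simps)
  then show ?thesis
    unfolding lattice_def by blast
qed

lemma finite_lattice_cball: "finite (lattice \<inter> cball 0 M)"
proof -
  define K where "K = \<lceil>2 * \<bar>M\<bar> + 3\<rceil>"
  define f where "f = (\<lambda>(m::int, n::int). Complex (1/2) (sqrt 3 / 6) + of_int m * a1 + of_int n * a2)"
  have "lattice \<inter> cball 0 M \<subseteq> f ` ({-K..K} \<times> {-K..K})"
  proof
    fix z assume z: "z \<in> lattice \<inter> cball 0 M"
    then obtain m n where z_eq: "z = f (m, n)"
      unfolding lattice_def f_def by auto
    have Re_z: "Re z = 1/2 + m + n/2" and Im_z: "Im z = sqrt 3 / 6 + n * sqrt 3 / 2"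
      by (simp_all add: z_eq f_def a1_def a2_def cos_60 sin_60)
    have "\<bar>Re z\<bar> \<le> M" "\<bar>Im z\<bar> \<le> M"
      using z abs_Re_le_cmod[of z] abs_Im_le_cmod[of z] by auto
    have "sqrt 3 \<le> sqrt 4"
      by (rule real_sqrt_le_mono) simp
    then have "sqrt 3 \<le> 2"
      by simp
    have "\<bar>real_of_int n\<bar> * sqrt 3 / 2 = \<bar>Im z - sqrt 3 / 6\<bar>"
      using Im_z by (simp add: abs_mult)
    also have "\<dots> \<le> \<bar>Im z\<bar> + sqrt 3 / 6"
      by (rule order_trans[OF abs_triangle_ineq4]) simp
    finally have "\<bar>real_of_int n\<bar> * sqrt 3 \<le> 2 * \<bar>M\<bar> + 2"
      using \<open>\<bar>Im z\<bar> \<le> M\<close> \<open>sqrt 3 \<le> 2\<close> by linarith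
    moreover have "\<bar>real_of_int n\<bar> \<le> \<bar>real_of_int n\<bar> * sqrt 3"
      by (simp add: mult_le_cancel_left1)
    ultimately have "\<bar>real_of_int n\<bar> \<le> 2 * \<bar>M\<bar> + 2"
      by linarith
    moreover have "\<bar>real_of_int m\<bar> \<le> \<bar>M\<bar> + 1/2 + \<bar>real_of_int n\<bar> / 2"
      using \<open>\<bar>Re z\<bar> \<le> M\<close> Re_z by linarith
    ultimately have "\<bar>n\<bar> \<le> K" "\<bar>m\<bar> \<le> K"
      unfolding K_def by linarith+
    then show "z \<in> f ` ({-K..K} \<times> {-K..K})"
      using z_eq by (intro image_eqI[of _ _ "(m, n)"]) (auto simp: abs_le_iff)
  qed
  then show ?thesis
    by (rule finite_subset) auto
qed

lemma norm_bond_ends_le: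
  assumes "b \<in> bonds"
  shows "cmod (fst b) \<le> bond_norm b + 1" "cmod (snd b) \<le> bond_norm b + 1"
proof -
  obtain p q where b: "b = (p, q)"
    by (cases b)
  obtain s where s: "s \<in> closed_segment p q" "bond_norm b = dist 0 s"
    using infdist_attains_inf[of "closed_segment p q" 0] b by (auto simp: bond_norm_def)
  have "dist p q = 1"
    using assms b by (simp add: bonds_def dist_norm)
  then have "dist s p \<le> 1" "dist s q \<le> 1"
    using dist_in_closed_segment[OF s(1)] by auto
  then show "cmod (fst b) \<le> bond_norm b + 1" "cmod (snd b) \<le> bond_norm b + 1"
    using s(2) b dist_triangle[of 0 p s] dist_triangle[of 0 q s]
    by (auto simp: dist_commute)
qed

lemma finite_bonds_near_origin: "finite {b \<in> bonds. bond_norm b \<le> R}"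
proof (rule finite_subset)
  let ?K = "lattice \<inter> cball 0 (R + 1)"
  show "{b \<in> bonds. bond_norm b \<le> R} \<subseteq> ?K \<times> ?K"
    using norm_bond_ends_le by (fastforce simp: bonds_def)
  show "finite (?K \<times> ?K)"
    using finite_lattice_cball by blast
qed

lemma neg_bond_in_bonds: "b \<in> bonds \<Longrightarrow> neg_bond b \<in> bonds"
  by (auto simp: bonds_def neg_bond_def norm_minus_commute)

lemma neg_bond_neg_bond [simp]: "neg_bond (neg_bond b) = b"
  by (simp add: neg_bond_def)

lemma pos_cell_dist_le_1:
  assumes "C \<in> pos_cells" "x \<in> C" "z \<in> C"
  shows "cmod (x - z) \<le> 1"
  using assms by (cases "x = z") (auto simp: pos_cells_def bonds_def)

lemma finite_ccw_bonds: "C \<in> pos_cells \<Longrightarrow> finite (ccw_bonds C)"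
proof -
  assume "C \<in> pos_cells"
  then have "card C = 3"
    by (simp add: pos_cells_def)
  then have "finite (C \<times> C)"
    by (metis card.infinite finite_SigmaI zero_neq_numeral)
  moreover have "ccw_bonds C \<subseteq> C \<times> C"
    by (auto simp: ccw_bonds_def)
  ultimately show ?thesis
    by (rule finite_subset[rotated])
qed

lemma ccw_bond_in_bonds:
  assumes "C \<in> pos_cells" "b \<in> ccw_bonds C"
  shows "b \<in> bonds" "fst b \<in> C"
  using assms by (auto simp: pos_cells_def ccw_bonds_def)

lemma chain_int_cell_boundary: "chain_int \<gamma> (cell_boundary C) = (\<Sum>b\<in>ccw_bonds C. \<gamma> b)"
  by (simp add: chain_int_def cell_boundary_def sum_unfold_sum_mset)

lemma chain_int_boundary:
  "finite A \<Longrightarrow> chain_int \<gamma> (boundary A) = (\<Sum>C\<in>A. chain_int \<gamma> (cell_boundary C))"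
  unfolding boundary_def by (induction A rule: finite_induct) (simp_all add: chain_int_def)

subsection \<open>Orientation of cells\<close>

definition orientation :: "complex \<Rightarrow> complex \<Rightarrow> complex \<Rightarrow> real" where
  "orientation p q r = Im (cnj (q - p) * (r - p))"

lemma ccw_bonds_orientation:
  "ccw_bonds T = {(p, q). p \<in> T \<and> q \<in> T \<and> p \<noteq> q \<and> (\<forall>r \<in> T - {p, q}. orientation p q r > 0)}"
  by (simp add: ccw_bonds_def orientation_def)

lemma orientation_rotate: "orientation q r p = orientation p q r"
  by (simp add: orientation_def algebra_simps)

lemma orientation_swap: "orientation q p r = - orientation p q r"
  by (simp add: orientation_def algebra_simps)

lemma orientation_point_reflection: "orientation (c - p) (c - q) (c - r) = orientation p q r"
  by (simp add: orientation_def algebra_simps)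

lemma unit_triangle_not_collinear:
  assumes "cmod (q - p) = 1" "cmod (r - p) = 1" "cmod (r - q) = 1"
  shows "orientation p q r \<noteq> 0"
proof
  assume collinear: "orientation p q r = 0"
  define a b c d where "a = Re (q - p)" "b = Im (q - p)" "c = Re (r - p)" "d = Im (r - p)"
  have "a\<^sup>2 + b\<^sup>2 = 1" "c\<^sup>2 + d\<^sup>2 = 1"
    using assms(1,2) unfolding a_b_c_d_def cmod_def by simp_all
  moreover have "(c - a)\<^sup>2 + (d - b)\<^sup>2 = 1"
    using assms(3) unfolding a_b_c_d_def cmod_def by simp
  moreover have "a * d - b * c = 0"
    using collinear unfolding a_b_c_d_def orientation_def by (simp add: algebra_simps)
  ultimately have "a * c + b * d = 1/2" "a * d - b * c = 0" "a\<^sup>2 + b\<^sup>2 = 1" "c\<^sup>2 + d\<^sup>2 = 1"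
    by (simp_all add: power2_eq_square algebra_simps)
  moreover have "(a * c + b * d)\<^sup>2 + (a * d - b * c)\<^sup>2 = (a\<^sup>2 + b\<^sup>2) * (c\<^sup>2 + d\<^sup>2)"
    by (simp add: power2_eq_square algebra_simps)
  ultimately have "(1/2)\<^sup>2 + 0\<^sup>2 = (1::real) * 1"
    by (simp only:)
  then show False
    by (simp add: power2_eq_square)
qed

lemma ccw_bonds_triangle:
  assumes "p \<noteq> q" "q \<noteq> r" "p \<noteq> r" "orientation p q r > 0"
  shows "ccw_bonds {p, q, r} = {(p, q), (q, r), (r, p)}"
proof -
  have third_vertex: "{p, q, r} - {p, q} = {r}" "{p, q, r} - {q, r} = {p}" "{p, q, r} - {r, p} = {q}"
       "{p, q, r} - {q, p} = {r}" "{p, q, r} - {r, q} = {p}" "{p, q, r} - {p, r} = {q}"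
    using assms(1-3) by auto
  have "orientation q r p > 0" "orientation r p q > 0"
       "\<not> orientation q p r > 0" "\<not> orientation r q p > 0" "\<not> orientation p r q > 0"
    using assms(4) orientation_rotate[of p q r] orientation_rotate[of q r p]
          orientation_swap[of p q r] orientation_swap[of q r p] orientation_swap[of r p q]
    by linarith+
  then show ?thesis
    using assms(1-4) unfolding ccw_bonds_orientation by (auto simp: third_vertex)
qed

lemma pos_cell_ccw_cycle:
  assumes "C \<in> pos_cells"
  obtains p q r where "C = {p, q, r}" "p \<noteq> q" "q \<noteq> r" "p \<noteq> r"
    "ccw_bonds C = {(p, q), (q, r), (r, p)}"
proof -
  obtain x y z where C: "C = {x, y, z}" "x \<noteq> y" "y \<noteq> z" "x \<noteq> z"
    using assms by (auto simp: pos_cells_def card_3_iff)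
  have "cmod (y - x) = 1" "cmod (z - x) = 1" "cmod (z - y) = 1"
    using assms C by (auto simp: pos_cells_def bonds_def)
  then have "orientation x y z \<noteq> 0"
    by (rule unit_triangle_not_collinear)
  then consider "orientation x y z > 0" | "orientation x z y > 0"
    using orientation_swap[of x z y] orientation_rotate[of x y z] orientation_rotate[of y z x]
    by linarith
  then show ?thesis
  proof cases
    case 1
    then show ?thesis
      using that C ccw_bonds_triangle[of x y z] by blast
  next
    case 2
    moreover have "C = {x, z, y}"
      using C by auto
    ultimately show ?thesis
      using that C ccw_bonds_triangle[of x z y] by auto
  qed
qed

lemma ccw_bonds_point_reflection:
  assumes "(u, v) \<in> ccw_bonds C"
  shows "(c - u, c - v) \<in> ccw_bonds ((\<lambda>z. c - z) ` C)"
  using assms unfolding ccw_bonds_orientation by (auto simp: orientation_point_reflection)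

lemma pos_cells_point_reflection:
  assumes "C \<in> pos_cells" "p \<in> lattice" "q \<in> lattice"
  shows "(\<lambda>z. p + q - z) ` C \<in> pos_cells"
  unfolding pos_cells_def
proof (intro CollectI conjI ballI impI)
  have "C \<subseteq> lattice" "card C = 3"
    using assms(1) by (simp_all add: pos_cells_def)
  then show "(\<lambda>z. p + q - z) ` C \<subseteq> lattice"
    using assms(2,3) lattice_point_reflection by blast
  show "card ((\<lambda>z. p + q - z) ` C) = 3"
    using \<open>card C = 3\<close> by (simp add: card_image inj_on_def)
  fix x w assume "x \<in> (\<lambda>z. p + q - z) ` C" "w \<in> (\<lambda>z. p + q - z) ` C" "x \<noteq> w"
  then obtain u v where uv: "u \<in> C" "v \<in> C" "x = p + q - u" "w = p + q - v" "u \<noteq> v"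
    by auto
  then have "(u, v) \<in> bonds"
    using assms(1) by (simp add: pos_cells_def)
  moreover have "x - w = - (u - v)"
    using uv by simp
  ultimately show "(x, w) \<in> bonds"
    using \<open>(\<lambda>z. p + q - z) ` C \<subseteq> lattice\<close> \<open>x \<in> _\<close> \<open>w \<in> _\<close>
    by (auto simp: bonds_def simp del: minus_diff_eq)
qed

lemma point_reflection_swaps_ccw_bond:
  assumes "C \<in> pos_cells" "(p, q) \<in> ccw_bonds C"
  shows "(\<lambda>z. p + q - z) ` C \<in> pos_cells" "(q, p) \<in> ccw_bonds ((\<lambda>z. p + q - z) ` C)"
proof -
  have "p \<in> lattice" "q \<in> lattice"
    using ccw_bond_in_bonds[OF assms] by (auto simp: bonds_def)
  then show "(\<lambda>z. p + q - z) ` C \<in> pos_cells"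
    using assms(1) by (rule pos_cells_point_reflection[rotated])
  show "(q, p) \<in> ccw_bonds ((\<lambda>z. p + q - z) ` C)"
    using ccw_bonds_point_reflection[OF assms(2), of "p + q"] by simp
qed

lemma card_cells_with_neg_bond:
  "card {C \<in> pos_cells. neg_bond b \<in> ccw_bonds C} = card {C \<in> pos_cells. b \<in> ccw_bonds C}"
proof -
  obtain p q where b: "b = (p, q)"
    by (cases b)
  have involution: "(\<lambda>z. p + q - z) ` (\<lambda>z. p + q - z) ` C = C" for C :: "complex set"
    by (simp add: image_image)
  note swaps = point_reflection_swaps_ccw_bond[of _ p q]
               point_reflection_swaps_ccw_bond[of _ q p, unfolded add.commute[of q p]]
  have "bij_betw (image (\<lambda>z. p + q - z)) {C \<in> pos_cells. (p, q) \<in> ccw_bonds C}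
                                         {C \<in> pos_cells. (q, p) \<in> ccw_bonds C}"
    by (rule bij_betw_byWitness[where f' = "image (\<lambda>z. p + q - z)"])
       (auto simp only: involution swaps mem_Collect_eq image_subset_iff)
  then show ?thesis
    by (simp add: b neg_bond_def bij_betw_same_card)
qed

subsection \<open>Cell integrals\<close>

lemma cell_integral_in_Ints:
  assumes "\<alpha> \<in> Dy_class y" "C \<in> pos_cells"
  shows "chain_int \<alpha> (cell_boundary C) \<in> \<int>"
proof -
  obtain p q r where "p \<noteq> q" "q \<noteq> r" "p \<noteq> r" and C: "ccw_bonds C = {(p, q), (q, r), (r, p)}"
    using pos_cell_ccw_cycle[OF assms(2)] .
  then have "(\<Sum>b\<in>ccw_bonds C. Dy y b) = 0"
    by (simp add: Dy_def)
  moreover have "(\<Sum>b\<in>ccw_bonds C. Dy y b - \<alpha> b) \<in> \<int>"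
    using assms ccw_bond_in_bonds by (intro Ints_sum) (auto simp: Dy_class_def)
  ultimately show ?thesis
    by (simp add: chain_int_cell_boundary sum_subtractf)
qed

lemma cell_integral_eq_0_if_small:
  assumes "\<alpha> \<in> Dy_class y" "C \<in> pos_cells" "\<forall>b\<in>ccw_bonds C. \<bar>\<alpha> b\<bar> < 1/3"
  shows "chain_int \<alpha> (cell_boundary C) = 0"
proof -
  obtain p q r where "p \<noteq> q" "q \<noteq> r" "p \<noteq> r" "ccw_bonds C = {(p, q), (q, r), (r, p)}"
    using pos_cell_ccw_cycle[OF assms(2)] .
  then have three: "finite (ccw_bonds C)" "ccw_bonds C \<noteq> {}" "card (ccw_bonds C) = 3"
    by auto
  have "\<bar>chain_int \<alpha> (cell_boundary C)\<bar> \<le> (\<Sum>b\<in>ccw_bonds C. \<bar>\<alpha> b\<bar>)"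
    unfolding chain_int_cell_boundary by (rule sum_abs)
  also have "\<dots> < (\<Sum>b\<in>ccw_bonds C. 1/3)"
    using three assms(3) by (intro sum_strict_mono) auto
  also have "\<dots> = 1"
    using three by simp
  finally show ?thesis
    using cell_integral_in_Ints[OF assms(1,2)] Ints_nonzero_abs_less1 by blast
qed

lemma Dy_class_eq_if_small:
  assumes "\<alpha> \<in> Dy_class y" "\<alpha>' \<in> Dy_class y" "b \<in> bonds" "\<bar>\<alpha> b\<bar> < 1/2"
  shows "\<alpha>' b = \<alpha> b"
proof -
  have "Dy y b - \<alpha> b \<in> \<int>" "Dy y b - \<alpha>' b \<in> \<int>"
    using assms(1-3) by (auto simp: Dy_class_def)
  then have "(Dy y b - \<alpha> b) - (Dy y b - \<alpha>' b) \<in> \<int>"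
    by (rule Ints_diff)
  moreover have "\<bar>\<alpha>' b\<bar> \<le> 1/2"
    using assms(2,3) by (auto simp: Dy_class_def)
  ultimately show ?thesis
    using assms(4) Ints_nonzero_abs_less1[of "\<alpha>' b - \<alpha> b"] by fastforce
qed

subsection \<open>Cancellation of finitely supported perturbations\<close>

definition cells_through :: "bond set \<Rightarrow> complex set set" where
  "cells_through B = {C \<in> pos_cells. ccw_bonds C \<inter> B \<noteq> {}}"

lemma finite_cells_with_bond: "finite {C \<in> pos_cells. b \<in> ccw_bonds C}"
proof (rule finite_subset)
  let ?K = "lattice \<inter> cball (fst b) 1"
  show "{C \<in> pos_cells. b \<in> ccw_bonds C} \<subseteq> Pow ?K"
  proof clarify
    fix C x assume "C \<in> pos_cells" "b \<in> ccw_bonds C" "x \<in> C"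
    then show "x \<in> ?K"
      using pos_cell_dist_le_1[of C "fst b" x] ccw_bond_in_bonds(2)[of C b]
      by (auto simp: pos_cells_def dist_norm)
  qed
  have "?K \<subseteq> lattice \<inter> cball 0 (cmod (fst b) + 1)"
  proof
    fix x assume "x \<in> ?K"
    then show "x \<in> lattice \<inter> cball 0 (cmod (fst b) + 1)"
      using dist_triangle[of 0 x "fst b"] by (simp add: dist_commute)
  qed
  then show "finite (Pow ?K)"
    using finite_lattice_cball finite_subset by blast
qed

lemma finite_cells_through: "finite B \<Longrightarrow> finite (cells_through B)"
proof -
  assume "finite B"
  moreover have "cells_through B = (\<Union>b\<in>B. {C \<in> pos_cells. b \<in> ccw_bonds C})"
    by (auto simp: cells_through_def)
  ultimately show ?thesis
    by (simp add: finite_cells_with_bond)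
qed

text \<open>Double counting: a bond \<open>b\<close> in the support occurs in \<open>N b\<close> cell boundaries, and
  \<open>N (-b) = N b\<close>, so the contributions of \<open>b\<close> and \<open>-b\<close> cancel.\<close>

lemma sum_cell_integrals_antisym_eq_0:
  fixes \<beta> :: "bond \<Rightarrow> real"
  defines "S \<equiv> {b \<in> bonds. \<beta> b \<noteq> 0}"
  assumes antisym: "\<And>b. b \<in> bonds \<Longrightarrow> \<beta> (neg_bond b) = - \<beta> b" and "finite S"
  shows "(\<Sum>C\<in>cells_through S. chain_int \<beta> (cell_boundary C)) = 0"
proof -
  define N where "N b = card {C \<in> pos_cells. b \<in> ccw_bonds C}" for b
  have fin: "finite (cells_through S)"
    using \<open>finite S\<close> by (rule finite_cells_through)
  have "chain_int \<beta> (cell_boundary C) = (\<Sum>b\<in>{b \<in> S. b \<in> ccw_bonds C}. \<beta> b)"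
    if "C \<in> cells_through S" for C
    unfolding chain_int_cell_boundary
    using that ccw_bond_in_bonds(1) finite_ccw_bonds
    by (intro sum.mono_neutral_right) (auto simp: S_def cells_through_def)
  then have "(\<Sum>C\<in>cells_through S. chain_int \<beta> (cell_boundary C))
        = (\<Sum>C\<in>cells_through S. \<Sum>b\<in>{b \<in> S. b \<in> ccw_bonds C}. \<beta> b)"
    by (rule sum.cong[OF refl])
  also have "\<dots> = (\<Sum>b\<in>S. \<Sum>C\<in>{C \<in> cells_through S. b \<in> ccw_bonds C}. \<beta> b)"
    using fin \<open>finite S\<close> by (rule sum.swap_restrict)
  also have "\<dots> = (\<Sum>b\<in>S. \<beta> b * N b)"
  proof (rule sum.cong[OF refl])
    fix b assume "b \<in> S"
    then have "{C \<in> cells_through S. b \<in> ccw_bonds C} = {C \<in> pos_cells. b \<in> ccw_bonds C}"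
      by (auto simp: cells_through_def)
    then show "(\<Sum>C\<in>{C \<in> cells_through S. b \<in> ccw_bonds C}. \<beta> b) = \<beta> b * N b"
      by (simp add: N_def)
  qed
  also have "\<dots> = 0"
  proof -
    have "(\<Sum>b\<in>S. \<beta> b * N b) = (\<Sum>b\<in>S. \<beta> (neg_bond b) * N (neg_bond b))"
      using antisym neg_bond_in_bonds
      by (intro sum.reindex_bij_witness[where i = neg_bond and j = neg_bond]) (auto simp: S_def)
    also have "\<dots> = - (\<Sum>b\<in>S. \<beta> b * N b)"
      using antisym by (simp add: S_def N_def card_cells_with_neg_bond sum_negf)
    finally show ?thesis
      by simp
  qed
  finally show ?thesis .
qed

lemma sum_cores_eq_sum_superset:
  assumes "finite U" "cores \<gamma> \<subseteq> U" "U \<subseteq> pos_cells"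
  shows "(\<Sum>C\<in>cores \<gamma>. chain_int \<gamma> (cell_boundary C)) = (\<Sum>C\<in>U. chain_int \<gamma> (cell_boundary C))"
  using assms by (intro sum.mono_neutral_left) (auto simp: cores_def)

lemma chain_int_boundary_eq_sum_cores:
  assumes "finite A" "A \<subseteq> pos_cells" "cores \<gamma> \<subseteq> A"
  shows "chain_int \<gamma> (boundary A) = (\<Sum>C\<in>cores \<gamma>. chain_int \<gamma> (cell_boundary C))"
  using assms by (simp add: chain_int_boundary sum_cores_eq_sum_superset)

lemma sum_cores_eq_if_finite_difference:
  assumes antisym: "\<And>b. b \<in> bonds \<Longrightarrow> \<gamma> (neg_bond b) = - \<gamma> b"
                   "\<And>b. b \<in> bonds \<Longrightarrow> \<gamma>' (neg_bond b) = - \<gamma>' b"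
    and fin_diff: "finite {b \<in> bonds. \<gamma>' b \<noteq> \<gamma> b}" and fin_cores: "finite (cores \<gamma>)"
  shows "finite (cores \<gamma>')"
    and "(\<Sum>C\<in>cores \<gamma>'. chain_int \<gamma>' (cell_boundary C))
         = (\<Sum>C\<in>cores \<gamma>. chain_int \<gamma> (cell_boundary C))"
proof -
  define \<beta> where "\<beta> b = \<gamma>' b - \<gamma> b" for b
  define S where "S = {b \<in> bonds. \<beta> b \<noteq> 0}"
  define U where "U = cores \<gamma> \<union> cells_through S"
  have "finite S"
    using fin_diff by (simp add: S_def \<beta>_def)
  then have fin_U: "finite U"
    using fin_cores finite_cells_through by (simp add: U_def)
  have U_pos: "U \<subseteq> pos_cells"
    by (auto simp: U_def cores_def cells_through_def)
  have diff: "chain_int \<beta> (cell_boundary C)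
              = chain_int \<gamma>' (cell_boundary C) - chain_int \<gamma> (cell_boundary C)" for C
    by (simp add: chain_int_cell_boundary \<beta>_def sum_subtractf)
  have outside: "chain_int \<beta> (cell_boundary C) = 0" if "C \<in> pos_cells" "C \<notin> cells_through S" for C
    unfolding chain_int_cell_boundary using that ccw_bond_in_bonds(1)[OF that(1)]
    by (intro sum.neutral) (auto simp: S_def cells_through_def)
  have "cores \<gamma>' \<subseteq> U"
    using outside diff by (fastforce simp: U_def cores_def)
  then show "finite (cores \<gamma>')"
    using fin_U finite_subset by blast
  have "(\<Sum>C\<in>cores \<gamma>'. chain_int \<gamma>' (cell_boundary C))
        - (\<Sum>C\<in>cores \<gamma>. chain_int \<gamma> (cell_boundary C))
        = (\<Sum>C\<in>U. chain_int \<beta> (cell_boundary C))"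
    using sum_cores_eq_sum_superset[OF fin_U \<open>cores \<gamma>' \<subseteq> U\<close> U_pos]
          sum_cores_eq_sum_superset[OF fin_U _ U_pos, of \<gamma>]
    by (simp add: U_def diff sum_subtractf)
  also have "\<dots> = (\<Sum>C\<in>cells_through S. chain_int \<beta> (cell_boundary C))"
    using fin_U U_pos outside by (intro sum.mono_neutral_right) (auto simp: U_def)
  also have "\<dots> = 0"
    unfolding S_def using antisym \<open>finite S\<close>
    by (intro sum_cell_integrals_antisym_eq_0) (simp_all add: \<beta>_def S_def)
  finally show "(\<Sum>C\<in>cores \<gamma>'. chain_int \<gamma>' (cell_boundary C))
                = (\<Sum>C\<in>cores \<gamma>. chain_int \<gamma> (cell_boundary C))"
    by simp
qed

theorem proposition2p3:
  fixes y :: "complex \<Rightarrow> real" and \<alpha> :: "bond \<Rightarrow> real"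
  assumes "\<alpha> \<in> Dy_class y"
    and "\<forall>\<epsilon>>0. \<exists>R. \<forall>b\<in>bonds. bond_norm b > R \<longrightarrow> \<bar>\<alpha> b\<bar> < \<epsilon>"
  shows "\<forall>\<alpha>'\<in>Dy_class y.
           finite (cores \<alpha>') \<and>
           (\<Sum>C\<in>cores \<alpha>'. chain_int \<alpha>' (cell_boundary C))
             = (\<Sum>C\<in>cores \<alpha>. chain_int \<alpha> (cell_boundary C)) \<and>
           (\<forall>A. finite A \<and> A \<subseteq> pos_cells \<and> cores \<alpha> \<subseteq> A \<longrightarrow>
              chain_int \<alpha> (boundary A) = (\<Sum>C\<in>cores \<alpha>. chain_int \<alpha> (cell_boundary C)))"
proof (intro ballI conjI allI impI)
  obtain R where far: "\<And>b. b \<in> bonds \<Longrightarrow> bond_norm b > R \<Longrightarrow> \<bar>\<alpha> b\<bar> < 1/3"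
    using assms(2) by (meson zero_less_divide_1_iff zero_less_numeral)
  let ?near = "{b \<in> bonds. bond_norm b \<le> R}"
  have "cores \<alpha> \<subseteq> cells_through ?near"
    using cell_integral_eq_0_if_small[OF assms(1)] far ccw_bond_in_bonds(1)
    by (fastforce simp: cores_def cells_through_def not_le)
  then have fin_cores: "finite (cores \<alpha>)"
    using finite_cells_through[OF finite_bonds_near_origin] finite_subset by blast
  have antisym: "\<And>b. b \<in> bonds \<Longrightarrow> \<gamma> (neg_bond b) = - \<gamma> b" if "\<gamma> \<in> Dy_class y" for \<gamma>
    using that by (simp add: Dy_class_def)
  fix \<alpha>' assume \<alpha>': "\<alpha>' \<in> Dy_class y"
  have "{b \<in> bonds. \<alpha>' b \<noteq> \<alpha> b} \<subseteq> ?near"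
    using Dy_class_eq_if_small[OF assms(1) \<alpha>'] far by (force simp: not_le)
  then have "finite {b \<in> bonds. \<alpha>' b \<noteq> \<alpha> b}"
    using finite_bonds_near_origin finite_subset by blast
  note perturbation = sum_cores_eq_if_finite_difference[OF antisym[OF assms(1)] antisym[OF \<alpha>']
                                                         this fin_cores]
  show "finite (cores \<alpha>')"
    by (rule perturbation(1))
  show "(\<Sum>C\<in>cores \<alpha>'. chain_int \<alpha>' (cell_boundary C))
        = (\<Sum>C\<in>cores \<alpha>. chain_int \<alpha> (cell_boundary C))"
    by (rule perturbation(2))
  fix A assume "finite A \<and> A \<subseteq> pos_cells \<and> cores \<alpha> \<subseteq> A"
  then show "chain_int \<alpha> (boundary A) = (\<Sum>C\<in>cores \<alpha>. chain_int \<alpha> (cell_boundary C))"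
    using chain_int_boundary_eq_sum_cores by blast
qed

end
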